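(* Let $G$ be a commutative group, $G'$ a subgroup, $1<p<\infty$, and $f\in\ell^1(G')$ nonnegative (viewed also as a function on $G$, extended by zero). Then $\gamma_p(f,G)=\gamma_p(f,G')$.
   Context: For nonnegative functions $f,g$ on a commutative group $K$, $(f\star g)(x)=\max_t f(t)g(x-t)$ (max-convolution). For nonnegative $f\in\ell^1(K)$ and $1/p+1/q=1$, $\gamma_p(f,K)=\inf_{g,h}\frac{\|f\star g\star h\|_1}{\|g\|_p\|h\|_q}$, the infimum over nonzero nonnegative $g,h\in\ell^1(K)$. *)

theory Defs
  imports "HOL-Analysis.Analysis"
begin

definition add_subgroup :: "'a::ab_group_add set \<Rightarrow> bool" where
  "add_subgroup K \<longleftrightarrow> 0 \<in> K \<and> (\<forall>x\<in>K. \<forall>y\<in>K. x + y \<in> K) \<and> (\<forall>x\<in>K. - x \<in> K)"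

text \<open>Max-convolution (f * g)(x) = max_t f(t) g(x - t); for nonnegative l1 functions the
  supremum is attained, so it is a maximum.\<close>
definition maxconv :: "('a::ab_group_add \<Rightarrow> real) \<Rightarrow> ('a \<Rightarrow> real) \<Rightarrow> 'a \<Rightarrow> real" where
  "maxconv f g x = (SUP t. f t * g (x - t))"

definition lpnorm :: "real \<Rightarrow> ('a \<Rightarrow> real) \<Rightarrow> real" where
  "lpnorm p g = (\<Sum>\<^sub>\<infinity>x. \<bar>g x\<bar> powr p) powr (1 / p)"

definition nonneg_l1_on :: "'a set \<Rightarrow> ('a \<Rightarrow> real) \<Rightarrow> bool" where
  "nonneg_l1_on K g \<longleftrightarrow> (\<forall>x. g x \<ge> 0) \<and> g summable_on UNIV \<and> (\<forall>x. x \<notin> K \<longrightarrow> g x = 0)"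

definition gamma_p :: "real \<Rightarrow> ('a::ab_group_add \<Rightarrow> real) \<Rightarrow> 'a set \<Rightarrow> real" where
  "gamma_p p f K = Inf {lpnorm 1 (maxconv (maxconv f g) h) / (lpnorm p g * lpnorm (p / (p - 1)) h)
     | g h. nonneg_l1_on K g \<and> nonneg_l1_on K h \<and> g \<noteq> (\<lambda>_. 0) \<and> h \<noteq> (\<lambda>_. 0)}"

end

theory Submission
  imports Defs
begin

(* Write F = f * g * h (max-convolutions) for nonnegative g, h on G, and slice G into the
   cosets r + K, r ranging over a set of representatives: g_a = g(a + .) and h_b = h(b + .)
   restricted to K. Because f lives on K, f * g_a * h_b is dominated on K by F(a + b + .), so a
   lower bound c for the ratios on K gives c ||g_a||_p ||h_b||_q <= sum over k in K of
   F(a + b + k). For fixed a these right-hand sides sum over the representatives b to ||F||_1,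
   and symmetrically for fixed b. A Hoelder-type estimate for such row and column sums yields
   c ||g||_p ||h||_q <= ||F||_1, so gamma_p(f, K) <= gamma_p(f, G); the reverse inequality
   holds since G admits more test functions than K. *)

section \<open>Nonnegative l1 functions and lp norms\<close>

abbreviation nonneg_l1 :: "('a \<Rightarrow> real) \<Rightarrow> bool" where
  "nonneg_l1 \<equiv> nonneg_l1_on UNIV"

lemma nonneg_l1_onD:
  assumes "nonneg_l1_on K u"
  shows "0 \<le> u x" and "u summable_on UNIV" and "u x \<le> infsum u UNIV"
proof -
  show "0 \<le> u x" and "u summable_on UNIV"
    using assms by (auto simp: nonneg_l1_on_def)
  then show "u x \<le> infsum u UNIV"
    using finite_sum_le_infsum[of u UNIV "{x}"] assms by (auto simp: nonneg_l1_on_def)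
qed

lemma nonneg_l1_on_imp_nonneg_l1: "nonneg_l1_on K u \<Longrightarrow> nonneg_l1 u"
  by (simp add: nonneg_l1_on_def)

lemma summable_on_translate_iff:
  fixes w :: "'a::ab_group_add \<Rightarrow> real"
  shows "(\<lambda>x. w (a + x)) summable_on UNIV \<longleftrightarrow> w summable_on UNIV"
proof -
  have "bij_betw (\<lambda>x. a + x) UNIV UNIV"
    by (rule bij_betw_byWitness[where f' = "\<lambda>y. y - a"]) auto
  then show ?thesis
    using summable_on_reindex_bij_betw[of "\<lambda>x. a + x" UNIV UNIV w] by simp
qed

lemma nonneg_l1_translate:
  fixes w :: "'a::ab_group_add \<Rightarrow> real"
  shows "nonneg_l1 w \<Longrightarrow> nonneg_l1 (\<lambda>x. w (a + x))"
  by (simp add: nonneg_l1_on_def summable_on_translate_iff)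

lemma has_sum_sum:
  fixes f :: "'i \<Rightarrow> 'a \<Rightarrow> real"
  assumes "finite I" "\<And>i. i \<in> I \<Longrightarrow> (f i has_sum s i) A"
  shows "((\<lambda>x. \<Sum>i\<in>I. f i x) has_sum (\<Sum>i\<in>I. s i)) A"
  using assms by (induction I rule: finite_induct) (auto intro: has_sum_add)

lemma powr_le_powr_minus_one_mult:
  fixes x M s :: real
  assumes "0 \<le> x" "x \<le> M" "1 \<le> s"
  shows "x powr s \<le> M powr (s - 1) * x"
proof (cases "x = 0")
  case False
  then have "x powr s = x powr (s - 1) * x"
    using powr_add[of x "s - 1" 1] assms(1) by simp
  also have "\<dots> \<le> M powr (s - 1) * x"
    using assms by (intro mult_right_mono powr_mono2) auto
  finally show ?thesis .
qed simp

lemma summable_on_powr_of_nonneg_l1: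
  assumes "nonneg_l1 w" "1 \<le> s"
  shows "(\<lambda>x. w x powr s) summable_on UNIV"
proof (rule summable_on_comparison_test)
  show "(\<lambda>x. infsum w UNIV powr (s - 1) * w x) summable_on UNIV"
    using nonneg_l1_onD(2)[OF assms(1)] by (rule summable_on_cmult_right)
  show "w x powr s \<le> infsum w UNIV powr (s - 1) * w x" for x
    using powr_le_powr_minus_one_mult[OF nonneg_l1_onD(1,3)[OF assms(1)] assms(2)] .
qed simp

lemma lpnorm_nonneg: "0 \<le> lpnorm s w"
  by (simp add: lpnorm_def)

lemma lpnorm_zero: "lpnorm s (\<lambda>_. 0) = 0"
  by (simp add: lpnorm_def)

lemma lpnorm_powr:
  assumes "\<And>x. 0 \<le> w x" "0 < s"
  shows "lpnorm s w powr s = (\<Sum>\<^sub>\<infinity>x. w x powr s)"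
  using assms by (simp add: lpnorm_def powr_powr infsum_nonneg)

lemma lpnorm_one:
  assumes "\<And>x. 0 \<le> w x"
  shows "lpnorm 1 w = infsum w UNIV"
  using assms by (simp add: lpnorm_def infsum_nonneg)

lemma lpnorm_pos:
  assumes "nonneg_l1 w" "1 \<le> s" "w \<noteq> (\<lambda>_. 0)"
  shows "0 < lpnorm s w"
proof -
  obtain x where "w x \<noteq> 0"
    using assms(3) by auto
  then have "0 < w x powr s"
    using nonneg_l1_onD(1)[OF assms(1)] by simp
  also have "\<dots> \<le> (\<Sum>\<^sub>\<infinity>x. w x powr s)"
    using finite_sum_le_infsum[OF summable_on_powr_of_nonneg_l1[OF assms(1,2)], of "{x}"] by simp
  finally show ?thesis
    using nonneg_l1_onD(1)[OF assms(1)] by (simp add: lpnorm_def)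
qed

section \<open>Max-convolution\<close>

lemma maxconv_ge:
  assumes "nonneg_l1 u" "nonneg_l1 v"
  shows "u t * v (x - t) \<le> maxconv u v x"
proof -
  have "u s * v (x - s) \<le> infsum u UNIV * infsum v UNIV" for s
    using assms by (intro mult_mono') (auto dest: nonneg_l1_onD)
  then have "bdd_above (range (\<lambda>s. u s * v (x - s)))"
    by (intro bdd_aboveI2)
  then show ?thesis
    unfolding maxconv_def by (intro cSUP_upper) simp_all
qed

lemma maxconv_le:
  assumes "\<And>t. u t * v (x - t) \<le> c"
  shows "maxconv u v x \<le> c"
  unfolding maxconv_def using assms by (intro cSUP_least) auto

lemma maxconv_nonneg:
  assumes "nonneg_l1 u" "nonneg_l1 v"
  shows "0 \<le> maxconv u v x"
  using maxconv_ge[OF assms, of 0 x] assms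
  by (meson nonneg_l1_onD(1) mult_nonneg_nonneg order_trans)

lemma maxconv_translate:
  "maxconv (\<lambda>y. u (a + y)) (\<lambda>y. v (b + y)) x = maxconv u v (a + b + x)"
proof -
  let ?G = "\<lambda>t. u t * v (a + b + x - t)"
  have "(SUP t. ?G (a + t)) = (SUP t. ?G t)"
    using image_image[of ?G "(+) a" UNIV] by simp
  then show ?thesis
    by (simp add: maxconv_def algebra_simps)
qed

lemma maxconv_mono:
  assumes "nonneg_l1 u'" "nonneg_l1 v'"
    and "\<And>y. 0 \<le> u y" "\<And>y. u y \<le> u' y" "\<And>y. 0 \<le> v y" "\<And>y. v y \<le> v' y"
  shows "maxconv u v x \<le> maxconv u' v' x"
proof (rule maxconv_le)
  fix t
  have "u t * v (x - t) \<le> u' t * v' (x - t)"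
    using assms by (intro mult_mono) (auto dest: nonneg_l1_onD)
  also have "\<dots> \<le> maxconv u' v' x"
    by (rule maxconv_ge[OF assms(1,2)])
  finally show "u t * v (x - t) \<le> maxconv u' v' x" .
qed

lemma nonneg_l1_maxconv:
  assumes "nonneg_l1 u" "nonneg_l1 v"
  shows "nonneg_l1 (maxconv u v)"
proof -
  let ?U = "infsum u UNIV" and ?V = "infsum v UNIV"
  have u: "u summable_on UNIV" "\<And>t. 0 \<le> u t"
    and v: "v summable_on UNIV" "\<And>t. 0 \<le> v t" "\<And>t. v t \<le> ?V"
    using assms by (auto dest: nonneg_l1_onD)
  have conv_summable: "(\<lambda>t. u t * v (x - t)) summable_on UNIV" for x
    using u v by (intro summable_on_comparison_test[OF summable_on_cmult_left[OF u(1), of ?V]])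
      (auto intro: mult_left_mono)
  have maxconv_le_conv: "maxconv u v x \<le> (\<Sum>\<^sub>\<infinity>t. u t * v (x - t))" for x
    using finite_sum_le_infsum[OF conv_summable, of "{t}" for t] u v by (intro maxconv_le) auto
  have mass_le: "(\<Sum>x\<in>X. u t * v (x - t)) \<le> u t * ?V" if "finite X" for X t
  proof -
    have "(\<Sum>x\<in>X. v (x - t)) = sum v ((\<lambda>x. x - t) ` X)"
      by (simp add: sum.reindex inj_on_def)
    also have "\<dots> \<le> ?V"
      using that v by (intro finite_sum_le_infsum) auto
    finally show ?thesis
      by (simp add: sum_distrib_left[symmetric] mult_left_mono u(2))
  qed
  have "sum (maxconv u v) X \<le> ?U * ?V" if "finite X" for X
  proof -
    have sum_conv: "((\<lambda>t. \<Sum>x\<in>X. u t * v (x - t))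
        has_sum (\<Sum>x\<in>X. \<Sum>\<^sub>\<infinity>t. u t * v (x - t))) UNIV"
      using that conv_summable by (intro has_sum_sum has_sum_infsum)
    have "sum (maxconv u v) X \<le> (\<Sum>x\<in>X. \<Sum>\<^sub>\<infinity>t. u t * v (x - t))"
      by (intro sum_mono maxconv_le_conv)
    also have "\<dots> = (\<Sum>\<^sub>\<infinity>t. \<Sum>x\<in>X. u t * v (x - t))"
      using sum_conv by (simp add: infsumI)
    also have "\<dots> \<le> (\<Sum>\<^sub>\<infinity>t. u t * ?V)"
      using sum_conv
      by (intro infsum_mono summable_on_cmult_left u mass_le that) (auto simp: summable_on_def)
    also have "\<dots> = ?U * ?V"
      by (simp add: infsum_cmult_left u(1))
    finally show ?thesis .
  qed
  then have "maxconv u v summable_on UNIV"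
    using maxconv_nonneg[OF assms] by (intro nonneg_bdd_above_summable_on bdd_aboveI2) auto
  then show ?thesis
    using maxconv_nonneg[OF assms] by (simp add: nonneg_l1_on_def)
qed

section \<open>A Hoelder-type inequality for row and column sums\<close>

lemma conjugate_powr_product_le:
  fixes A B U V L p q :: real
  assumes pq: "1 < p" "1 < q" "1 / p + 1 / q = 1"
    and pos: "0 < A" "0 < B" "0 \<le> U" "0 \<le> V" "0 \<le> L"
    and AV: "A * V \<le> B powr (q - 1) * L" and BU: "B * U \<le> A powr (p - 1) * L"
  shows "U powr (1 / p) * V powr (1 / q) \<le> L"
proof -
  have p_exp: "(p - 1) / p = 1 / q" and q_exp: "(q - 1) / q = 1 / p"
    using pq by (auto simp: field_simps)
  have "U powr (1 / p) \<le> (A powr (p - 1) * L / B) powr (1 / p)"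
    using BU pos pq by (intro powr_mono2) (auto simp: field_simps)
  also have "\<dots> = A powr (1 / q) * L powr (1 / p) / B powr (1 / p)"
    using pos by (simp add: powr_mult powr_divide powr_powr p_exp)
  finally have U_le: "U powr (1 / p) \<le> A powr (1 / q) * L powr (1 / p) / B powr (1 / p)" .
  have "V powr (1 / q) \<le> (B powr (q - 1) * L / A) powr (1 / q)"
    using AV pos pq by (intro powr_mono2) (auto simp: field_simps)
  also have "\<dots> = B powr (1 / p) * L powr (1 / q) / A powr (1 / q)"
    using pos by (simp add: powr_mult powr_divide powr_powr q_exp)
  finally have V_le: "V powr (1 / q) \<le> B powr (1 / p) * L powr (1 / q) / A powr (1 / q)" .
  have "U powr (1 / p) * V powr (1 / q)
      \<le> (A powr (1 / q) * L powr (1 / p) / B powr (1 / p))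
        * (B powr (1 / p) * L powr (1 / q) / A powr (1 / q))"
    using U_le V_le by (intro mult_mono) auto
  also have "\<dots> = L powr (1 / p + 1 / q)"
    using pos by (simp add: powr_add)
  finally show ?thesis
    using pq pos by simp
qed

lemma SUP_mult_infsum_powr_le:
  fixes X Y :: "'i \<Rightarrow> real"
  assumes "1 \<le> s" "I \<noteq> {}" "bdd_above (Y ` I)"
    and "\<And>i. i \<in> I \<Longrightarrow> 0 \<le> X i" "\<And>i. i \<in> I \<Longrightarrow> 0 \<le> Y i"
    and summable: "(\<lambda>i. Y i powr s) summable_on I" and pos: "0 < (\<Sum>\<^sub>\<infinity>i\<in>I. Y i powr s)"
    and row: "\<And>i S. i \<in> I \<Longrightarrow> finite S \<Longrightarrow> S \<subseteq> I \<Longrightarrow> X i * sum Y S \<le> L"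
  shows "(SUP i\<in>I. X i) * (\<Sum>\<^sub>\<infinity>i\<in>I. Y i powr s) \<le> (SUP i\<in>I. Y i) powr (s - 1) * L"
proof -
  let ?B = "SUP i\<in>I. Y i" and ?V = "\<Sum>\<^sub>\<infinity>i\<in>I. Y i powr s"
  have "X i * ?V \<le> ?B powr (s - 1) * L" if i: "i \<in> I" for i
  proof -
    have "X i * ?V = (\<Sum>\<^sub>\<infinity>j\<in>I. X i * Y j powr s)"
      using summable by (simp add: infsum_cmult_right)
    also have "\<dots> \<le> ?B powr (s - 1) * L"
    proof (rule infsum_le_finite_sums)
      show "(\<lambda>j. X i * Y j powr s) summable_on I"
        using summable by (rule summable_on_cmult_right)
      fix S assume S: "finite S" "S \<subseteq> I"
      have "(\<Sum>j\<in>S. X i * Y j powr s) \<le> (\<Sum>j\<in>S. X i * (?B powr (s - 1) * Y j))"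
        using S assms i
        by (intro sum_mono mult_left_mono powr_le_powr_minus_one_mult cSUP_upper) auto
      also have "\<dots> = ?B powr (s - 1) * (X i * sum Y S)"
        by (simp add: sum_distrib_left sum_distrib_right algebra_simps)
      also have "\<dots> \<le> ?B powr (s - 1) * L"
        using row[OF i S] by (intro mult_left_mono) auto
      finally show "(\<Sum>j\<in>S. X i * Y j powr s) \<le> ?B powr (s - 1) * L" .
    qed
    finally show ?thesis .
  qed
  then have "(SUP i\<in>I. X i) \<le> ?B powr (s - 1) * L / ?V"
    using pos by (intro cSUP_least \<open>I \<noteq> {}\<close>) (simp add: pos_le_divide_eq)
  then show ?thesis
    using pos by (simp add: pos_le_divide_eq)
qed

lemma pos_of_infsum_powr_pos:
  fixes X :: "'i \<Rightarrow> real"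
  assumes "0 < (\<Sum>\<^sub>\<infinity>i\<in>I. X i powr s)" "\<And>i. i \<in> I \<Longrightarrow> 0 \<le> X i"
  obtains i where "i \<in> I" "0 < X i"
  using assms infsum_0[of I "\<lambda>i. X i powr s"] by (metis less_eq_real_def powr_0 less_irrefl)

(* With A and B the suprema of X and Y, the row bounds give A * sum Y^q <= B^(q-1) * L and
   the column bounds give B * sum X^p <= A^(p-1) * L; for conjugate exponents the powers of
   A and B cancel when the two are combined. *)
lemma lp_lq_product_le_of_row_col_sums:
  fixes X Y :: "'i \<Rightarrow> real" and p q L :: real
  assumes pq: "1 < p" "1 < q" "1 / p + 1 / q = 1" and "0 \<le> L"
    and X: "\<And>i. i \<in> I \<Longrightarrow> 0 \<le> X i" and Y: "\<And>i. i \<in> I \<Longrightarrow> 0 \<le> Y i"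
    and summable: "(\<lambda>i. X i powr p) summable_on I" "(\<lambda>i. Y i powr q) summable_on I"
    and row: "\<And>i S. i \<in> I \<Longrightarrow> finite S \<Longrightarrow> S \<subseteq> I \<Longrightarrow> X i * sum Y S \<le> L"
    and col: "\<And>i S. i \<in> I \<Longrightarrow> finite S \<Longrightarrow> S \<subseteq> I \<Longrightarrow> Y i * sum X S \<le> L"
  shows "(\<Sum>\<^sub>\<infinity>i\<in>I. X i powr p) powr (1 / p) * (\<Sum>\<^sub>\<infinity>i\<in>I. Y i powr q) powr (1 / q) \<le> L"
proof -
  let ?U = "\<Sum>\<^sub>\<infinity>i\<in>I. X i powr p" and ?V = "\<Sum>\<^sub>\<infinity>i\<in>I. Y i powr q"
  let ?A = "SUP i\<in>I. X i" and ?B = "SUP i\<in>I. Y i"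
  have "0 \<le> ?U" "0 \<le> ?V"
    by (simp_all add: infsum_nonneg)
  consider "?U = 0 \<or> ?V = 0" | "0 < ?U" "0 < ?V"
    using \<open>0 \<le> ?U\<close> \<open>0 \<le> ?V\<close> by linarith
  then show ?thesis
  proof cases
    case 1
    then show ?thesis
      using \<open>0 \<le> L\<close> by auto
  next
    case 2
    obtain i0 where i0: "i0 \<in> I" "0 < X i0"
      using pos_of_infsum_powr_pos[OF \<open>0 < ?U\<close> X] by blast
    obtain j0 where j0: "j0 \<in> I" "0 < Y j0"
      using pos_of_infsum_powr_pos[OF \<open>0 < ?V\<close> Y] by blast
    have "X i \<le> L / Y j0" if "i \<in> I" for i
      using row[OF that, of "{j0}"] j0 by (simp add: pos_le_divide_eq)
    then have bdd_X: "bdd_above (X ` I)"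
      by (intro bdd_aboveI2)
    have "Y i \<le> L / X i0" if "i \<in> I" for i
      using col[OF that, of "{i0}"] i0 by (simp add: pos_le_divide_eq)
    then have bdd_Y: "bdd_above (Y ` I)"
      by (intro bdd_aboveI2)
    have "0 < ?A" "0 < ?B"
      using cSUP_upper[OF i0(1) bdd_X] cSUP_upper[OF j0(1) bdd_Y] i0 j0 by linarith+
    moreover have "?A * ?V \<le> ?B powr (q - 1) * L"
      using pq X Y summable row 2 i0 bdd_Y by (intro SUP_mult_infsum_powr_le) auto
    moreover have "?B * ?U \<le> ?A powr (p - 1) * L"
      using pq X Y summable col 2 i0 bdd_X by (intro SUP_mult_infsum_powr_le) auto
    ultimately show ?thesis
      using conjugate_powr_product_le[OF pq] \<open>0 \<le> ?U\<close> \<open>0 \<le> ?V\<close> \<open>0 \<le> L\<close> by blast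
  qed
qed

section \<open>Lower bounds for gamma_p\<close>

(* Unlike in gamma_p, zero test functions need not be excluded: they satisfy the inequality
   trivially. *)
definition gamma_lower_bound ::
  "real \<Rightarrow> ('a::ab_group_add \<Rightarrow> real) \<Rightarrow> 'a set \<Rightarrow> real \<Rightarrow> bool" where
  "gamma_lower_bound p f K c \<longleftrightarrow> (\<forall>g h. nonneg_l1_on K g \<longrightarrow> nonneg_l1_on K h \<longrightarrow>
     c * (lpnorm p g * lpnorm (p / (p - 1)) h) \<le> lpnorm 1 (maxconv (maxconv f g) h))"

lemma gamma_lower_bound_subset:
  assumes "K \<subseteq> K'" "gamma_lower_bound p f K' c"
  shows "gamma_lower_bound p f K c"
proof -
  have "nonneg_l1_on K g \<Longrightarrow> nonneg_l1_on K' g" for g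
    using assms(1) by (auto simp: nonneg_l1_on_def)
  then show ?thesis
    using assms(2) by (simp add: gamma_lower_bound_def)
qed

lemma lpnorm_conjugate_product_pos:
  assumes "1 < p" "nonneg_l1_on K g" "nonneg_l1_on K h" "g \<noteq> (\<lambda>_. 0)" "h \<noteq> (\<lambda>_. 0)"
  shows "0 < lpnorm p g * lpnorm (p / (p - 1)) h"
proof -
  have "1 < p / (p - 1)"
    using assms(1) by (simp add: field_simps)
  then show ?thesis
    using assms by (auto intro!: mult_pos_pos lpnorm_pos nonneg_l1_on_imp_nonneg_l1)
qed

lemma gamma_lower_bound_gamma_p:
  assumes "1 < p"
  shows "gamma_lower_bound p f K (gamma_p p f K)"
  unfolding gamma_lower_bound_def
proof (intro allI impI)
  fix g h :: "'a \<Rightarrow> real"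
  assume g: "nonneg_l1_on K g" and h: "nonneg_l1_on K h"
  let ?L = "lpnorm 1 (maxconv (maxconv f g) h)" and ?N = "lpnorm p g * lpnorm (p / (p - 1)) h"
  show "gamma_p p f K * ?N \<le> ?L"
  proof (cases "g = (\<lambda>_. 0) \<or> h = (\<lambda>_. 0)")
    case True
    then show ?thesis
      by (auto simp: lpnorm_zero lpnorm_nonneg)
  next
    case False
    then have "0 < ?N"
      using assms g h by (intro lpnorm_conjugate_product_pos) auto
    moreover have "gamma_p p f K \<le> ?L / ?N"
      unfolding gamma_p_def using g h False
      by (intro cInf_lower)
        (auto intro!: bdd_belowI[of _ 0] divide_nonneg_nonneg mult_nonneg_nonneg lpnorm_nonneg)
    ultimately show ?thesis
      by (simp add: pos_le_divide_eq)
  qed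
qed

lemma le_gamma_p:
  assumes "1 < p" "0 \<in> K" "gamma_lower_bound p f K c"
  shows "c \<le> gamma_p p f K"
  unfolding gamma_p_def
proof (rule cInf_greatest, goal_cases)
  case 1
  let ?delta = "\<lambda>x::'a. if x = 0 then 1 else 0 :: real"
  have "nonneg_l1_on K ?delta"
    using assms(2) finite_nonzero_values_imp_summable_on[of UNIV ?delta]
    by (auto simp: nonneg_l1_on_def)
  moreover have "?delta \<noteq> (\<lambda>_. 0)"
    by (metis zero_neq_one)
  ultimately show ?case
    by blast
next
  case (2 x)
  then obtain g h
    where x: "x = lpnorm 1 (maxconv (maxconv f g) h) / (lpnorm p g * lpnorm (p / (p - 1)) h)"
      and g: "nonneg_l1_on K g" "g \<noteq> (\<lambda>_. 0)" and h: "nonneg_l1_on K h" "h \<noteq> (\<lambda>_. 0)"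
    by blast
  have "0 < lpnorm p g * lpnorm (p / (p - 1)) h"
    using assms(1) g h by (intro lpnorm_conjugate_product_pos)
  then show ?case
    using assms(3) g h unfolding x gamma_lower_bound_def by (simp add: pos_le_divide_eq)
qed

section \<open>Decomposition into cosets of a subgroup\<close>

locale additive_subgroup =
  fixes K :: "'a::ab_group_add set"
  assumes add_subgroup: "add_subgroup K"
begin

lemma zero_mem: "0 \<in> K"
  and add_mem: "x \<in> K \<Longrightarrow> y \<in> K \<Longrightarrow> x + y \<in> K"
  and uminus_mem: "x \<in> K \<Longrightarrow> - x \<in> K"
  using add_subgroup by (auto simp: add_subgroup_def)

lemma diff_mem: "x \<in> K \<Longrightarrow> y \<in> K \<Longrightarrow> x - y \<in> K"
  using add_mem[of x "- y"] uminus_mem[of y] by simp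

definition rep :: "'a \<Rightarrow> 'a" where
  "rep y = (SOME z. y - z \<in> K)"

definition reps :: "'a set" where
  "reps = range rep"

lemma diff_rep_mem: "y - rep y \<in> K"
  unfolding rep_def by (rule someI[of _ y]) (simp add: zero_mem)

lemma rep_cong:
  assumes "y - y' \<in> K"
  shows "rep y = rep y'"
proof -
  have "y - z \<in> K \<longleftrightarrow> y' - z \<in> K" for z
    using add_mem[OF assms, of "y' - z"] diff_mem[of "y - z" "y - y'"] assms by auto
  then show ?thesis
    unfolding rep_def by simp
qed

lemma rep_reps: "r \<in> reps \<Longrightarrow> rep r = r"
  unfolding reps_def using rep_cong[OF diff_rep_mem] by auto

lemma bij_betw_coset_decomposition:
  "bij_betw (\<lambda>(r, k). a + r + k) (reps \<times> K) UNIV"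
proof -
  have "rep (r + k) = r" if "r \<in> reps" "k \<in> K" for r k
    using rep_cong[of "r + k" r] rep_reps[of r] that by simp
  then show ?thesis
    using diff_rep_mem
    by (intro bij_betw_byWitness[where f' = "\<lambda>y. (rep (y - a), y - a - rep (y - a))"])
      (auto simp: reps_def add.assoc)
qed

lemma infsum_coset_decomposition:
  fixes w :: "'a \<Rightarrow> real"
  assumes "w summable_on UNIV"
  shows "(\<lambda>r. \<Sum>\<^sub>\<infinity>k\<in>K. w (a + r + k)) summable_on reps"
    and "(\<Sum>\<^sub>\<infinity>r\<in>reps. \<Sum>\<^sub>\<infinity>k\<in>K. w (a + r + k)) = infsum w UNIV"
proof -
  have summable: "(\<lambda>(r, k). w (a + r + k)) summable_on (reps \<times> K)"
    using summable_on_reindex_bij_betw[OF bij_betw_coset_decomposition[of a], of w] assms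
    by (simp add: case_prod_beta')
  have "(\<lambda>k. w (a + r + k)) summable_on K" for r
    using assms summable_on_subset_banach
    by (metis summable_on_translate_iff[of w "a + r"] add.assoc subset_UNIV)
  then show "(\<lambda>r. \<Sum>\<^sub>\<infinity>k\<in>K. w (a + r + k)) summable_on reps"
    using summable_on_SigmaD[OF summable] by simp
  have "infsum w UNIV = (\<Sum>\<^sub>\<infinity>(r, k)\<in>reps \<times> K. w (a + r + k))"
    using infsum_reindex_bij_betw[OF bij_betw_coset_decomposition[of a], of w]
    by (simp add: case_prod_beta')
  also have "\<dots> = (\<Sum>\<^sub>\<infinity>r\<in>reps. \<Sum>\<^sub>\<infinity>k\<in>K. w (a + r + k))"
    using infsum_Sigma_banach[OF summable] by simp
  finally show "(\<Sum>\<^sub>\<infinity>r\<in>reps. \<Sum>\<^sub>\<infinity>k\<in>K. w (a + r + k)) = infsum w UNIV" ..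
qed

definition coset_slice :: "('a \<Rightarrow> real) \<Rightarrow> 'a \<Rightarrow> 'a \<Rightarrow> real" where
  "coset_slice w a k = (if k \<in> K then w (a + k) else 0)"

lemma coset_slice_le: "(\<And>x. 0 \<le> w x) \<Longrightarrow> coset_slice w a k \<le> w (a + k)"
  by (simp add: coset_slice_def)

lemma nonneg_l1_on_coset_slice:
  assumes "nonneg_l1 w"
  shows "nonneg_l1_on K (coset_slice w a)"
proof -
  have "(\<lambda>k. w (a + k)) summable_on K"
    using assms summable_on_subset_banach[of "\<lambda>k. w (a + k)" UNIV K]
    by (simp add: nonneg_l1_on_def summable_on_translate_iff)
  then have "coset_slice w a summable_on UNIV"
    using summable_on_cong_neutral[of UNIV K "coset_slice w a" "\<lambda>k. w (a + k)"]
    by (auto simp: coset_slice_def)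
  then show ?thesis
    using assms by (auto simp: nonneg_l1_on_def coset_slice_def)
qed

lemma lpnorm_coset_slice_powr:
  assumes "\<And>x. 0 \<le> w x" "0 < s"
  shows "lpnorm s (coset_slice w a) powr s = (\<Sum>\<^sub>\<infinity>k\<in>K. w (a + k) powr s)"
proof -
  have "lpnorm s (coset_slice w a) powr s = (\<Sum>\<^sub>\<infinity>k. coset_slice w a k powr s)"
    using assms by (intro lpnorm_powr) (auto simp: coset_slice_def)
  also have "\<dots> = (\<Sum>\<^sub>\<infinity>k\<in>K. w (a + k) powr s)"
    by (rule infsum_cong_neutral) (auto simp: coset_slice_def)
  finally show ?thesis .
qed

lemma lpnorm_eq_coset_slices:
  assumes "nonneg_l1 w" "1 \<le> s"
  shows "(\<lambda>r. lpnorm s (coset_slice w r) powr s) summable_on reps"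
    and "lpnorm s w = (\<Sum>\<^sub>\<infinity>r\<in>reps. lpnorm s (coset_slice w r) powr s) powr (1 / s)"
proof -
  have w: "\<And>x. 0 \<le> w x"
    using assms(1) by (rule nonneg_l1_onD)
  have slice: "lpnorm s (coset_slice w r) powr s = (\<Sum>\<^sub>\<infinity>k\<in>K. w (0 + r + k) powr s)" for r
    using lpnorm_coset_slice_powr[OF w] assms(2) by simp
  show "(\<lambda>r. lpnorm s (coset_slice w r) powr s) summable_on reps"
    unfolding slice
    by (rule infsum_coset_decomposition(1)[OF summable_on_powr_of_nonneg_l1[OF assms]])
  show "lpnorm s w = (\<Sum>\<^sub>\<infinity>r\<in>reps. lpnorm s (coset_slice w r) powr s) powr (1 / s)"
    unfolding slice infsum_coset_decomposition(2)[OF summable_on_powr_of_nonneg_l1[OF assms]]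
    using w by (simp add: lpnorm_def)
qed

lemma maxconv_eq_0_outside:
  assumes "\<And>x. x \<notin> K \<Longrightarrow> u x = 0" "\<And>x. x \<notin> K \<Longrightarrow> v x = 0" "x \<notin> K"
  shows "maxconv u v x = 0"
proof -
  have "u t * v (x - t) = 0" for t
    using assms add_mem[of "x - t" t] by (cases "t \<in> K") auto
  then have vanishing: "(\<lambda>t. u t * v (x - t)) = (\<lambda>_. 0)"
    by auto
  show ?thesis
    unfolding maxconv_def vanishing by simp
qed

lemma maxconv_coset_slices_le:
  assumes "nonneg_l1 f" "nonneg_l1 g" "nonneg_l1 h"
  shows "maxconv (maxconv f (coset_slice g a)) (coset_slice h b) k
    \<le> maxconv (maxconv f g) h (a + b + k)"
proof -
  have nonneg: "\<And>x. 0 \<le> f x" "\<And>x. 0 \<le> g x" "\<And>x. 0 \<le> h x"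
    using assms by (auto dest: nonneg_l1_onD)
  have "maxconv (maxconv f (coset_slice g a)) (coset_slice h b) k
      \<le> maxconv (maxconv f (\<lambda>y. g (a + y))) (\<lambda>y. h (b + y)) k"
    using assms nonneg
    by (intro maxconv_mono maxconv_nonneg nonneg_l1_maxconv nonneg_l1_translate coset_slice_le
        nonneg_l1_on_imp_nonneg_l1[OF nonneg_l1_on_coset_slice]) (auto simp: coset_slice_def)
  also have "\<dots> = maxconv (\<lambda>s. maxconv f g (a + s)) (\<lambda>y. h (b + y)) k"
  proof -
    have "maxconv f (\<lambda>y. g (a + y)) = (\<lambda>s. maxconv f g (a + s))"
      using maxconv_translate[of f 0 g a] by (simp add: fun_eq_iff)
    then show ?thesis
      by simp
  qed
  also have "\<dots> = maxconv (maxconv f g) h (a + b + k)"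
    by (rule maxconv_translate)
  finally show ?thesis .
qed

lemma coset_slices_bound:
  assumes "gamma_lower_bound p f K c" "nonneg_l1_on K f" "nonneg_l1 g" "nonneg_l1 h"
  shows "c * (lpnorm p (coset_slice g a) * lpnorm (p / (p - 1)) (coset_slice h b))
    \<le> (\<Sum>\<^sub>\<infinity>k\<in>K. maxconv (maxconv f g) h (a + b + k))"
proof -
  let ?M = "maxconv (maxconv f (coset_slice g a)) (coset_slice h b)"
  let ?F = "maxconv (maxconv f g) h"
  have f: "nonneg_l1 f"
    using assms(2) by (rule nonneg_l1_on_imp_nonneg_l1)
  have M: "nonneg_l1 ?M" and F: "nonneg_l1 ?F"
    using f assms(3,4) nonneg_l1_on_imp_nonneg_l1[OF nonneg_l1_on_coset_slice]
    by (blast intro: nonneg_l1_maxconv)+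
  have "c * (lpnorm p (coset_slice g a) * lpnorm (p / (p - 1)) (coset_slice h b)) \<le> lpnorm 1 ?M"
    using assms(1,3,4) by (simp add: gamma_lower_bound_def nonneg_l1_on_coset_slice)
  also have "\<dots> = infsum ?M UNIV"
    using M by (intro lpnorm_one nonneg_l1_onD)
  also have "\<dots> \<le> (\<Sum>\<^sub>\<infinity>k\<in>K. ?F (a + b + k))"
  proof (rule infsum_mono_neutral)
    show "?M summable_on UNIV"
      using M by (rule nonneg_l1_onD)
    show "(\<lambda>k. ?F (a + b + k)) summable_on K"
      using F summable_on_subset_banach[of "\<lambda>k. ?F (a + b + k)" UNIV K]
      by (simp add: nonneg_l1_on_def summable_on_translate_iff)
    show "?M k \<le> ?F (a + b + k)" if "k \<in> UNIV \<inter> K" for k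
      using f assms(3,4) by (rule maxconv_coset_slices_le)
    have "maxconv f (coset_slice g a) x = 0" if "x \<notin> K" for x
      using assms(2) that
      by (intro maxconv_eq_0_outside) (auto simp: nonneg_l1_on_def coset_slice_def)
    then show "?M k \<le> 0" if "k \<in> UNIV - K" for k
      using that by (simp add: maxconv_eq_0_outside coset_slice_def)
  qed (use F in \<open>auto dest: nonneg_l1_onD\<close>)
  finally show ?thesis .
qed

lemma sum_coset_slices_bound:
  assumes "gamma_lower_bound p f K c" "nonneg_l1_on K f" "nonneg_l1 g" "nonneg_l1 h"
    and "finite S" "S \<subseteq> reps"
  defines "G \<equiv> \<lambda>r. lpnorm p (coset_slice g r)"
    and "H \<equiv> \<lambda>r. lpnorm (p / (p - 1)) (coset_slice h r)"
  shows "(\<Sum>b\<in>S. c * (G a * H b)) \<le> lpnorm 1 (maxconv (maxconv f g) h)"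
    and "(\<Sum>a\<in>S. c * (G a * H b)) \<le> lpnorm 1 (maxconv (maxconv f g) h)"
proof -
  let ?F = "maxconv (maxconv f g) h"
  have F: "nonneg_l1 ?F"
    using assms(2-4) by (intro nonneg_l1_maxconv nonneg_l1_on_imp_nonneg_l1)
  have coset_sums_le: "(\<Sum>b\<in>S. \<Sum>\<^sub>\<infinity>k\<in>K. ?F (x + b + k)) \<le> lpnorm 1 ?F" for x
  proof -
    have "(\<Sum>b\<in>S. \<Sum>\<^sub>\<infinity>k\<in>K. ?F (x + b + k)) \<le> (\<Sum>\<^sub>\<infinity>b\<in>reps. \<Sum>\<^sub>\<infinity>k\<in>K. ?F (x + b + k))"
      using F assms(5,6)
      by (intro finite_sum_le_infsum infsum_coset_decomposition(1) infsum_nonneg)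
        (auto dest: nonneg_l1_onD)
    also have "\<dots> = lpnorm 1 ?F"
      using F by (simp add: infsum_coset_decomposition(2) lpnorm_one nonneg_l1_onD)
    finally show ?thesis .
  qed
  have "(\<Sum>b\<in>S. c * (G a * H b)) \<le> (\<Sum>b\<in>S. \<Sum>\<^sub>\<infinity>k\<in>K. ?F (a + b + k))"
    unfolding G_def H_def using assms(1-4) by (intro sum_mono coset_slices_bound)
  then show "(\<Sum>b\<in>S. c * (G a * H b)) \<le> lpnorm 1 ?F"
    using coset_sums_le by (rule order_trans)
  have "(\<Sum>a\<in>S. c * (G a * H b)) \<le> (\<Sum>a\<in>S. \<Sum>\<^sub>\<infinity>k\<in>K. ?F (b + a + k))"
    unfolding G_def H_def using assms(1-4) coset_slices_bound
    by (intro sum_mono) (simp add: add.commute)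
  then show "(\<Sum>a\<in>S. c * (G a * H b)) \<le> lpnorm 1 ?F"
    using coset_sums_le by (rule order_trans)
qed

lemma gamma_lower_bound_UNIV:
  assumes "1 < p" "nonneg_l1_on K f" "gamma_lower_bound p f K c"
  shows "gamma_lower_bound p f UNIV c"
  unfolding gamma_lower_bound_def
proof (intro allI impI)
  fix g h :: "'a \<Rightarrow> real"
  assume g: "nonneg_l1 g" and h: "nonneg_l1 h"
  define q where "q = p / (p - 1)"
  define L where "L = lpnorm 1 (maxconv (maxconv f g) h)"
  define G where "G r = lpnorm p (coset_slice g r)" for r
  define H where "H r = lpnorm q (coset_slice h r)" for r
  show "c * (lpnorm p g * lpnorm (p / (p - 1)) h) \<le> L"
  proof (cases "c \<le> 0")
    case True
    then have "c * (lpnorm p g * lpnorm (p / (p - 1)) h) \<le> 0"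
      by (intro mult_nonpos_nonneg mult_nonneg_nonneg lpnorm_nonneg)
    then show ?thesis
      unfolding L_def using lpnorm_nonneg order_trans by blast
  next
    case False
    have pq: "1 < p" "1 < q" "1 / p + 1 / q = 1"
      using assms(1) by (auto simp: q_def field_simps)
    have row: "G a * sum H S \<le> L / c" if "finite S" "S \<subseteq> reps" for a S
      using sum_coset_slices_bound(1)[OF assms(3,2) g h that, of a] False
      by (simp add: G_def H_def L_def q_def pos_le_divide_eq sum_distrib_left ac_simps)
    have col: "H b * sum G S \<le> L / c" if "finite S" "S \<subseteq> reps" for b S
      using sum_coset_slices_bound(2)[OF assms(3,2) g h that, of b] False
      by (simp add: G_def H_def L_def q_def pos_le_divide_eq sum_distrib_left sum_distrib_right
          ac_simps)
    have norms: "lpnorm p g = (\<Sum>\<^sub>\<infinity>r\<in>reps. G r powr p) powr (1 / p)"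
      "lpnorm q h = (\<Sum>\<^sub>\<infinity>r\<in>reps. H r powr q) powr (1 / q)"
      and summable: "(\<lambda>r. G r powr p) summable_on reps" "(\<lambda>r. H r powr q) summable_on reps"
      unfolding G_def H_def using pq g h by (auto intro!: lpnorm_eq_coset_slices)
    have "lpnorm p g * lpnorm q h \<le> L / c"
      unfolding norms using False
      by (intro lp_lq_product_le_of_row_col_sums[OF pq _ _ _ summable row col])
        (auto simp: G_def H_def L_def lpnorm_nonneg)
    then show ?thesis
      using False by (simp add: pos_le_divide_eq q_def mult.commute)
  qed
qed

end

theorem mainTheorem10:
  fixes f :: "'a::ab_group_add \<Rightarrow> real" and K :: "'a set" and p :: real
  assumes "add_subgroup K"
    and "1 < p"
    and "nonneg_l1_on K f"
  shows "gamma_p p f UNIV = gamma_p p f K"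
proof -
  interpret additive_subgroup K
    using assms(1) by unfold_locales
  have UNIV_bound: "gamma_lower_bound p f UNIV (gamma_p p f UNIV)"
    and K_bound: "gamma_lower_bound p f K (gamma_p p f K)"
    using assms(2) by (rule gamma_lower_bound_gamma_p)+
  have "gamma_p p f UNIV \<le> gamma_p p f K"
    using gamma_lower_bound_subset[OF subset_UNIV UNIV_bound]
    by (rule le_gamma_p[OF assms(2) zero_mem])
  moreover have "gamma_p p f K \<le> gamma_p p f UNIV"
    using gamma_lower_bound_UNIV[OF assms(2,3) K_bound] by (rule le_gamma_p[OF assms(2) UNIV_I])
  ultimately show ?thesis
    by simp
qed

end
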